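(* Let $(L,\mu,\nabla)$ be a gerbe datum on $M\rtimes\Gamma$ with direct sum bundle $\mathcal E$, let $\mathcal A=\Gamma^\infty_c(\mathrm{End}\,\mathcal E)$ and $\mathcal B=C^\infty_c(M\rtimes\Gamma,L)$. For a $\Gamma$-invariant cochain $c\in CC^n(\mathcal A)^\Gamma$ define $\Psi_2(c)\in CC^n(\mathcal B)$ by multilinearity from its values on elementary arguments: for $g_0,\dots,g_n\in\Gamma$ and $a_{g_i}\in\Gamma^\infty_c(L_{g_i})$, $\Psi_2(c)(a_{g_0},a_{g_1},\dots,a_{g_n})=c\big(E_{1,g_0}(a_{g_0}),E_{g_0,g_0g_1}(a_{g_1}^{g_0}),\dots,E_{g_0\cdots g_{n-1},\,g_0\cdots g_n}(a_{g_n}^{g_0\cdots g_{n-1}})\big)$ if $g_0g_1\cdots g_n=1$, and $=0$ otherwise; and for the unit, $\Psi_2(c)(\lambda1,a_{g_1},\dots,a_{g_n})=\lambda\,c\big(1,E_{1,g_1}(a_{g_1}),E_{g_1,g_1g_2}(a_{g_2}^{g_1}),\dots,E_{g_1\cdots g_{n-1},g_1\cdots g_n}(a_{g_n}^{g_1\cdots g_{n-1}})\big)$ if $g_1\cdots g_n=1$, and $=0$ otherwise. Then $\Psi_2$ commutes with each operator $d^i$ and each operator $\bar s^i$ (defined in the context); consequently $\Psi_2\circ b=b\circ\Psi_2$, $\Psi_2\circ B=B\circ\Psi_2$, and $\Psi_2$ extends $u$-linearly to a morphism of complexes $(CC^\bullet(\mathcal A)^\Gamma[u^{-1},u],b+uB)\to(CC^\bullet(\mathcal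 B)[u^{-1},u],b+uB)$.
   Context: Let $M$ be a smooth manifold with a smooth right action of a discrete group $\Gamma$, $(x,g)\mapsto xg$; for a bundle, section or form, a superscript $g$ denotes pullback along $x\mapsto xg$ (e.g. $s^g(x)=s(xg)$). A gerbe datum on $M\rtimes\Gamma$ consists of complex line bundles $L_g\to M$ ($g\in\Gamma$), isomorphisms $\mu_{g,h}:L_g\otimes(L_h)^g\to L_{gh}$ satisfying $\mu_{gh,k}\circ(\mu_{g,h}\otimes\mathrm{id})=\mu_{g,hk}\circ(\mathrm{id}\otimes(\mu_{h,k})^g)$ on $L_g\otimes(L_h)^g\otimes(L_k)^{gh}$, and connections $\nabla_g$ on $L_g$ (the connections play no role here). The direct sum bundle is $\mathcal E=\bigoplus_{g\in\Gamma}L_g\to M$. For a section $f$ of $\mathrm{End}\,\mathcal E$ write $E_{g,h}(f)\in\Gamma^\infty(\mathrm{Hom}(L_g,L_h))$ for its matrix components. $\mathcal A=\Gamma^\infty_c(\mathrm{End}\,\mathcal E)$ is the space of sections with compactly supported components, only finitely many nonzero, with product given by $E_{h,k}(f_1f_2)=\sum_{g}E_{g,k}(f_2)\circ E_{h,g}(f_1)$. For $k,h\in\Gamma$ and a section $b$ of $(L_h)^k$, $E_{k,kh}(b)$ denotes the section $v\mapsto\mu_{k,h}(v\otimes b)$ of $\mathrm{Hom}(L_k,L_{kh})$ (so a section $a$ of $L_g$ gives $E_{1,g}(a)\in\Gamma^\infty(\mathrm{Hom}(L_1,L_g))$). $\Gamma$ acts on $\mathcal A$ by $g\cdot E_{g_1,g_2}(f)=\mu_{g,g_2}\circ(\mathrm{id}\otimes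 f^g)\circ\mu_{g,g_1}^{-1}\in\Gamma^\infty(\mathrm{Hom}(L_{gg_1},L_{gg_2}))$, and trivially on the unit. The twisted convolution algebra $\mathcal B=C^\infty_c(M\rtimes\Gamma,L)$ consists of compactly supported sections of the bundle over $M\times\Gamma$ equal to $L_g$ on $M\times\{g\}$, i.e. finite sums $\sum_g a_g$ with $a_g\in\Gamma^\infty_c(L_g)$, with product $(f_1*f_2)(x,g)=\sum_{g_1g_2=g}\mu_{g_1,g_2}\big(f_1(x,g_1)\otimes f_2(xg_1,g_2)\big)$; thus $a_g*a_h=\mu_{g,h}(a_g\otimes a_h^g)\in\Gamma^\infty_c(L_{gh})$. For an algebra $\mathcal C$ with unitization $\widetilde{\mathcal C}=\mathcal C\oplus\mathbb C$, $CC^n(\mathcal C)$ is the space of linear functionals on $\widetilde{\mathcal C}\otimes\mathcal C^{\otimes n}$. For $f\in CC^n(\mathcal C)$ define $d^if\in CC^{n+1}(\mathcal C)$ by $(d^if)(\tilde a_0,a_1,\dots,a_{n+1})=f(\tilde a_0,\dots,a_ia_{i+1},\dots,a_{n+1})$ for $0\le i\le n$ and $(d^{n+1}f)(\tilde a_0,\dots,a_{n+1})=f(a_{n+1}\tilde a_0,a_1,\dots,a_n)$; for $f\in CC^{n+1}(\mathcal C)$ define $(\bar s^if)(\tilde a_0,a_1,\dots,a_n)=(-1)^{ni}f(1,a_i,\dots,a_n,a_0,\dots,a_{i-1})$, $0\le i\le n$, where $a_0$ is the $\mathcal C$-component of $\tilde a_0$. Then $b=\sum_i d^i$ and $B=\sum_i\bar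 s^i$, and $u$ is a formal variable. A cochain $c\in CC^n(\mathcal A)$ is $\Gamma$-invariant if $c(g\cdot x_0,\dots,g\cdot x_n)=c(x_0,\dots,x_n)$ for all $g\in\Gamma$; these form $CC^n(\mathcal A)^\Gamma$. *)

theory Defs
  imports Complex_Main
begin

text \<open>The unitization is modelled as pairs (lambda, a) standing for lambda*1 + a.
  A cochain in CC^n is a function of (a0~, [a1,...,an]); it is a genuine element
  of CC^n when it is multilinear on the carrier (predicate cochain_on).\<close>

record 'a calg =
  acarr :: "'a set"
  amul  :: "'a \<Rightarrow> 'a \<Rightarrow> 'a"
  aadd  :: "'a \<Rightarrow> 'a \<Rightarrow> 'a"
  asc   :: "complex \<Rightarrow> 'a \<Rightarrow> 'a"
  azero :: "'a"

type_synonym 'a cochain = "complex \<times> 'a \<Rightarrow> 'a list \<Rightarrow> complex"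

definition cochain_args :: "'a calg \<Rightarrow> nat \<Rightarrow> complex \<times> 'a \<Rightarrow> 'a list \<Rightarrow> bool" where
  "cochain_args R n x0 as \<longleftrightarrow> snd x0 \<in> acarr R \<and> length as = n \<and> set as \<subseteq> acarr R"

definition cochain_on :: "'a calg \<Rightarrow> nat \<Rightarrow> 'a cochain \<Rightarrow> bool" where
  "cochain_on R n c \<longleftrightarrow>
     (\<forall>l l' a a' as \<alpha> \<beta>. a \<in> acarr R \<longrightarrow> a' \<in> acarr R \<longrightarrow> length as = n \<longrightarrow> set as \<subseteq> acarr R \<longrightarrow>
        c (\<alpha> * l + \<beta> * l', aadd R (asc R \<alpha> a) (asc R \<beta> a')) as = \<alpha> * c (l, a) as + \<beta> * c (l', a') as)
   \<and> (\<forall>x0 as i y z \<alpha> \<beta>. cochain_args R n x0 as \<longrightarrow> i < n \<longrightarrow> y \<in> acarr R \<longrightarrow> z \<in> acarr R \<longrightarrow>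
        c x0 (as[i := aadd R (asc R \<alpha> y) (asc R \<beta> z)]) = \<alpha> * c x0 (as[i := y]) + \<beta> * c x0 (as[i := z]))"

text \<open>Face operators d^i : CC^n \<rightarrow> CC^(n+1), 0 \<le> i \<le> n+1; the argument list is [a1,...,a(n+1)].\<close>
definition dface :: "'a calg \<Rightarrow> nat \<Rightarrow> nat \<Rightarrow> 'a cochain \<Rightarrow> 'a cochain" where
  "dface R n i f = (\<lambda>(l, a0) as.
     if i = 0 then f (0, aadd R (asc R l (as ! 0)) (amul R a0 (as ! 0))) (tl as)
     else if i \<le> n then f (l, a0) (take (i - 1) as @ [amul R (as ! (i - 1)) (as ! i)] @ drop (i + 1) as)
     else f (0, aadd R (asc R l (as ! n)) (amul R (as ! n) a0)) (take n as))"

text \<open>Operators sbar^i : CC^(n+1) \<rightarrow> CC^n, 0 \<le> i \<le> n; the argument list is [a1,...,an];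
  the arguments of f are 1, a_i, ..., a_n, a_0, ..., a_(i-1).\<close>
definition sbar :: "'a calg \<Rightarrow> nat \<Rightarrow> nat \<Rightarrow> 'a cochain \<Rightarrow> 'a cochain" where
  "sbar R n i f = (\<lambda>(l, a0) as.
     if i = 0 then f (1, azero R) (a0 # as)
     else (-1) ^ (n * i) * f (1, azero R) (drop (i - 1) as @ [a0] @ take (i - 1) as))"

definition bop :: "'a calg \<Rightarrow> nat \<Rightarrow> 'a cochain \<Rightarrow> 'a cochain" where
  "bop R n f = (\<lambda>x0 as. \<Sum>i\<le>Suc n. dface R n i f x0 as)"

definition Bop :: "'a calg \<Rightarrow> nat \<Rightarrow> 'a cochain \<Rightarrow> 'a cochain" where
  "Bop R n f = (\<lambda>x0 as. \<Sum>i\<le>n. sbar R n i f x0 as)"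

text \<open>Each fibre (L_g)_x is identified (set-theoretically, not smoothly) with C.
  Then mu_(g,h) at x is multiplication by a nonzero number m g h x, and a section of
  Hom(L_g, L_h) is a complex-valued function. The smooth structure is recorded by the
  spaces Sec g (compactly supported smooth sections of L_g) and HomSec g h
  (compactly supported smooth sections of Hom(L_g, L_h)), written in this identification.
  The group Gamma is written additively (type class group_add, not necessarily
  commutative): g + h is the product gh and 0 is the unit. act x g is the right action xg.\<close>

definition subspace_C :: "('m \<Rightarrow> complex) set \<Rightarrow> bool" where
  "subspace_C S \<longleftrightarrow> (\<lambda>_. 0) \<in> S \<and> (\<forall>f\<in>S. \<forall>f'\<in>S. (\<lambda>x. f x + f' x) \<in> S)
       \<and> (\<forall>f\<in>S. \<forall>\<alpha>. (\<lambda>x. \<alpha> * f x) \<in> S)"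

definition gerbe_datum ::
  "('m \<Rightarrow> 'g::group_add \<Rightarrow> 'm) \<Rightarrow> ('g \<Rightarrow> 'g \<Rightarrow> 'm \<Rightarrow> complex)
   \<Rightarrow> ('g \<Rightarrow> ('m \<Rightarrow> complex) set) \<Rightarrow> ('g \<Rightarrow> 'g \<Rightarrow> ('m \<Rightarrow> complex) set) \<Rightarrow> bool" where
  "gerbe_datum act m Sec HomSec \<longleftrightarrow>
     \<comment> \<open>right action\<close>
     (\<forall>x. act x 0 = x) \<and> (\<forall>x g h. act (act x g) h = act x (g + h))
     \<comment> \<open>mu_(g,h) is an isomorphism\<close>
   \<and> (\<forall>g h x. m g h x \<noteq> 0)
     \<comment> \<open>associativity of mu\<close>
   \<and> (\<forall>g h k x. m (g + h) k x * m g h x = m g (h + k) x * m h k (act x g))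
     \<comment> \<open>section spaces are vector spaces\<close>
   \<and> (\<forall>g. subspace_C (Sec g)) \<and> (\<forall>g h. subspace_C (HomSec g h))
     \<comment> \<open>for a in Sec h, E_(k,kh)(a^k) is a smooth compactly supported section of Hom(L_k,L_kh)\<close>
   \<and> (\<forall>k h a. a \<in> Sec h \<longrightarrow> (\<lambda>x. m k h x * a (act x k)) \<in> HomSec k (k + h))
     \<comment> \<open>composition of sections of Hom bundles\<close>
   \<and> (\<forall>g h k \<phi> \<psi>. \<phi> \<in> HomSec g h \<longrightarrow> \<psi> \<in> HomSec h k \<longrightarrow> (\<lambda>x. \<psi> x * \<phi> x) \<in> HomSec g k)
     \<comment> \<open>a_g * a_h = mu_(g,h)(a_g (x) a_h^g)\<close>
   \<and> (\<forall>g h a a'. a \<in> Sec g \<longrightarrow> a' \<in> Sec h \<longrightarrow> (\<lambda>x. m g h x * a x * a' (act x g)) \<in> Sec (g + h))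
     \<comment> \<open>the Gamma-action maps sections of Hom(L_g1,L_g2) to sections of Hom(L_gg1,L_gg2)\<close>
   \<and> (\<forall>g g1 g2 \<phi>. \<phi> \<in> HomSec g1 g2 \<longrightarrow>
        (\<lambda>x. m g g2 x * \<phi> (act x g) / m g g1 x) \<in> HomSec (g + g1) (g + g2))"

text \<open>An element f is its matrix: f g h x = E_(g,h)(f) at x.\<close>
type_synonym ('g, 'm) matA = "'g \<Rightarrow> 'g \<Rightarrow> 'm \<Rightarrow> complex"

definition suppA :: "('g, 'm) matA \<Rightarrow> ('g \<times> 'g) set" where
  "suppA f = {(g, h). f g h \<noteq> (\<lambda>_. 0)}"

definition algA :: "('g \<Rightarrow> 'g \<Rightarrow> ('m \<Rightarrow> complex) set) \<Rightarrow> ('g, 'm) matA calg" where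
  "algA HomSec = \<lparr> acarr = {f. finite (suppA f) \<and> (\<forall>g h. f g h \<in> HomSec g h)},
     amul = (\<lambda>f1 f2 h k x. \<Sum>g\<in>{g. f1 h g \<noteq> (\<lambda>_. 0)}. f2 g k x * f1 h g x),
     aadd = (\<lambda>f1 f2 g h x. f1 g h x + f2 g h x),
     asc = (\<lambda>\<alpha> f g h x. \<alpha> * f g h x),
     azero = (\<lambda>g h x. 0) \<rparr>"

text \<open>The Gamma-action on A: (g . f)_(g g1, g g2) = mu_(g,g2) o (id (x) f^g) o mu_(g,g1)^(-1).\<close>
definition actA :: "('m \<Rightarrow> 'g::group_add \<Rightarrow> 'm) \<Rightarrow> ('g \<Rightarrow> 'g \<Rightarrow> 'm \<Rightarrow> complex) \<Rightarrow> 'g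
                     \<Rightarrow> ('g, 'm) matA \<Rightarrow> ('g, 'm) matA" where
  "actA act m g f = (\<lambda>h k x. m g (- g + k) x * f (- g + h) (- g + k) (act x g) / m g (- g + h) x)"

text \<open>Gamma-invariance (Gamma acts trivially on the unit).\<close>
definition invariant_cochain :: "('m \<Rightarrow> 'g::group_add \<Rightarrow> 'm) \<Rightarrow> ('g \<Rightarrow> 'g \<Rightarrow> 'm \<Rightarrow> complex)
     \<Rightarrow> ('g \<Rightarrow> 'g \<Rightarrow> ('m \<Rightarrow> complex) set) \<Rightarrow> nat \<Rightarrow> ('g, 'm) matA cochain \<Rightarrow> bool" where
  "invariant_cochain act m HomSec n c \<longleftrightarrow>
     (\<forall>g l a0 as. cochain_args (algA HomSec) n (l, a0) as \<longrightarrow>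
        c (l, actA act m g a0) (map (actA act m g) as) = c (l, a0) as)"

text \<open>E_(k,kh)(a^k) for a section a of L_h: the matrix with the single entry (k, kh).\<close>
definition Eel :: "('m \<Rightarrow> 'g::group_add \<Rightarrow> 'm) \<Rightarrow> ('g \<Rightarrow> 'g \<Rightarrow> 'm \<Rightarrow> complex) \<Rightarrow> 'g \<Rightarrow> 'g
                   \<Rightarrow> ('m \<Rightarrow> complex) \<Rightarrow> ('g, 'm) matA" where
  "Eel act m k h a = (\<lambda>g g' x. if g = k \<and> g' = k + h then m k h x * a (act x k) else 0)"

text \<open>An element f is given by f g x = f(x, g).\<close>
type_synonym ('g, 'm) elB = "'g \<Rightarrow> 'm \<Rightarrow> complex"

definition suppB :: "('g, 'm) elB \<Rightarrow> 'g set" where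
  "suppB f = {g. f g \<noteq> (\<lambda>_. 0)}"

definition algB :: "('m \<Rightarrow> 'g::group_add \<Rightarrow> 'm) \<Rightarrow> ('g \<Rightarrow> 'g \<Rightarrow> 'm \<Rightarrow> complex)
                    \<Rightarrow> ('g \<Rightarrow> ('m \<Rightarrow> complex) set) \<Rightarrow> ('g, 'm) elB calg" where
  "algB act m Sec = \<lparr> acarr = {f. finite (suppB f) \<and> (\<forall>g. f g \<in> Sec g)},
     amul = (\<lambda>f1 f2 g x. \<Sum>g1\<in>suppB f1. m g1 (- g1 + g) x * f1 g1 x * f2 (- g1 + g) (act x g1)),
     aadd = (\<lambda>f1 f2 g x. f1 g x + f2 g x),
     asc = (\<lambda>\<alpha> f g x. \<alpha> * f g x),
     azero = (\<lambda>g x. 0) \<rparr>"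

definition pp :: "'g::group_add list \<Rightarrow> nat \<Rightarrow> 'g" where
  "pp gs j = sum_list (take j gs)"

text \<open>The elementary arguments E_(1,g0)(a_g0), E_(g0,g0g1)(a_g1^g0), ... for
  fs = [f_0,...,f_k] and group elements gs = [g_0,...,g_k], with a_gj = f_j(., g_j).\<close>
definition Eargs :: "('m \<Rightarrow> 'g::group_add \<Rightarrow> 'm) \<Rightarrow> ('g \<Rightarrow> 'g \<Rightarrow> 'm \<Rightarrow> complex)
                     \<Rightarrow> ('g, 'm) elB list \<Rightarrow> 'g list \<Rightarrow> ('g, 'm) matA list" where
  "Eargs act m fs gs = map (\<lambda>j. Eel act m (pp gs j) (gs ! j) ((fs ! j) (gs ! j))) [0..<length gs]"

definition labels :: "('g, 'm) elB list \<Rightarrow> 'g list set" where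
  "labels fs = {gs. length gs = length fs \<and> (\<forall>j<length fs. gs ! j \<in> suppB (fs ! j))}"

text \<open>Psi_2(c), extended multilinearly from the elementary arguments.\<close>
definition psi2 :: "('m \<Rightarrow> 'g::group_add \<Rightarrow> 'm) \<Rightarrow> ('g \<Rightarrow> 'g \<Rightarrow> 'm \<Rightarrow> complex)
                   \<Rightarrow> ('g, 'm) matA cochain \<Rightarrow> ('g, 'm) elB cochain" where
  "psi2 act m c = (\<lambda>(l, f0) fs.
      (\<Sum>gs\<in>{gs \<in> labels (f0 # fs). sum_list gs = 0}.
          c (0, hd (Eargs act m (f0 # fs) gs)) (tl (Eargs act m (f0 # fs) gs)))
    + l * (\<Sum>gs\<in>{gs \<in> labels fs. sum_list gs = 0}.
          c (1, (\<lambda>g h x. 0)) (Eargs act m fs gs)))"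

end

theory Submission
  imports Defs
begin

text \<open>
  A cochain c on A is evaluated by Psi_2 only on elementary matrices
  E_(p,p+g)(a^p).  Write expand F L for the sum, over all labellings gs of a list L of
  elements of B by group elements in their supports with total product 1, of F applied to
  the list of elementary matrices attached to (L, gs); then psi2 c is a combination of two
  such expansions (one for the a_0-slot, one for the unit slot).  Three structural facts
  about expansions carry the whole argument:
  (1) expand is linear in each slot, because F is multilinear and E is linear;
  (2) merging two neighbouring entries u, v of L into their product u*v in B corresponds to
      multiplying the two neighbouring elementary matrices in A, since
      E_(p,p+g)(a) E_(p+g,p+g+g')(b) = E_(p,p+g+g')(a*b);
  (3) rotating L corresponds to rotating the argument list, provided F is Gamma-invariant,
      since moving a block to the front shifts all offsets p by one group element, which is
      exactly the Gamma-action on elementary matrices.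
  The inner faces d^i use (2), the faces d^0 and d^(n+1) use (1), (2) and, for d^(n+1), (3);
  the operators sbar^i use (3) and the vanishing of multilinear maps on a zero slot.
\<close>

lemma length_labels: "gs \<in> labels L \<Longrightarrow> length gs = length L"
  by (simp add: labels_def)

lemma labels_Nil [simp]: "labels [] = {[]}"
  by (auto simp: labels_def)

lemma labels_Cons: "labels (f # L) = (\<lambda>(g, gs). g # gs) ` (suppB f \<times> labels L)"
proof (rule set_eqI)
  fix xs
  show "xs \<in> labels (f # L) \<longleftrightarrow> xs \<in> (\<lambda>(g, gs). g # gs) ` (suppB f \<times> labels L)"
  proof (cases xs)
    case (Cons g gs)
    have "(\<forall>j<length (f # L). xs ! j \<in> suppB ((f # L) ! j))
          \<longleftrightarrow> g \<in> suppB f \<and> (\<forall>j<length L. gs ! j \<in> suppB (L ! j))"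
      by (auto simp: Cons less_Suc_eq_0_disj)
    then show ?thesis by (auto simp: labels_def Cons)
  qed (auto simp: labels_def)
qed

lemma finite_labels: "\<forall>f\<in>set L. finite (suppB f) \<Longrightarrow> finite (labels L)"
  by (induction L) (auto simp: labels_Cons)

lemma sum_labels_Cons:
  assumes "finite (suppB f)" "\<forall>f\<in>set L. finite (suppB f)"
  shows "(\<Sum>xs\<in>labels (f # L). F xs) = (\<Sum>g\<in>suppB f. \<Sum>gs\<in>labels L. F (g # gs))"
proof -
  have inj: "inj_on (\<lambda>(g, gs). g # gs) (suppB f \<times> labels L)"
    by (auto simp: inj_on_def)
  have "(\<Sum>xs\<in>labels (f # L). F xs) = (\<Sum>p\<in>suppB f \<times> labels L. F (fst p # snd p))"
    unfolding labels_Cons sum.reindex[OF inj] by (simp add: case_prod_beta)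
  also have "\<dots> = (\<Sum>g\<in>suppB f. \<Sum>gs\<in>labels L. F (g # gs))"
    by (simp add: sum.cartesian_product case_prod_beta)
  finally show ?thesis .
qed

lemma sum_labels_append:
  assumes "\<forall>f\<in>set L1. finite (suppB f)" "\<forall>f\<in>set L2. finite (suppB f)"
  shows "(\<Sum>xs\<in>labels (L1 @ L2). F xs) = (\<Sum>a\<in>labels L1. \<Sum>b\<in>labels L2. F (a @ b))"
  using assms(1)
proof (induction L1 arbitrary: F)
  case (Cons f L1)
  have "(\<Sum>xs\<in>labels ((f # L1) @ L2). F xs) = (\<Sum>g\<in>suppB f. \<Sum>xs\<in>labels (L1 @ L2). F (g # xs))"
    unfolding append_Cons by (rule sum_labels_Cons) (use Cons.prems assms(2) in auto)
  also have "\<dots> = (\<Sum>g\<in>suppB f. \<Sum>a\<in>labels L1. \<Sum>b\<in>labels L2. F (g # a @ b))"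
    using Cons.IH Cons.prems by simp
  also have "\<dots> = (\<Sum>a\<in>labels (f # L1). \<Sum>b\<in>labels L2. F (a @ b))"
    using Cons.prems assms(2) by (simp add: sum_labels_Cons)
  finally show ?case .
qed simp

lemma subspace_C_lin:
  "subspace_C S \<Longrightarrow> a \<in> S \<Longrightarrow> b \<in> S \<Longrightarrow> (\<lambda>x. \<alpha> * a x + \<beta> * b x) \<in> S"
  unfolding subspace_C_def by metis

lemma subspace_C_sum:
  assumes "subspace_C S" "finite I" "\<forall>i\<in>I. \<phi> i \<in> S"
  shows "(\<lambda>x. \<Sum>i\<in>I. \<phi> i x) \<in> S"
  using assms(2,3)
proof (induction I rule: finite_induct)
  case empty then show ?case using assms(1) by (simp add: subspace_C_def)
next
  case (insert i I)
  then have "(\<lambda>x. 1 * \<phi> i x + 1 * (\<Sum>i\<in>I. \<phi> i x)) \<in> S"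
    by (intro subspace_C_lin[OF assms(1)]) auto
  then show ?case using insert by simp
qed

text \<open>elem_args p L gs is the list E_(p,p+g_0)(a_0^p), E_(p+g_0,p+g_0+g_1)(a_1^(p+g_0)), ...
  with a_j = (L ! j) g_j; for p = 0 this is the list Eargs used in the definition of Psi_2,
  but the recursion over the offset p is better suited to induction.\<close>
fun elem_args :: "('m \<Rightarrow> 'g::group_add \<Rightarrow> 'm) \<Rightarrow> ('g \<Rightarrow> 'g \<Rightarrow> 'm \<Rightarrow> complex) \<Rightarrow> 'g
     \<Rightarrow> ('g, 'm) elB list \<Rightarrow> 'g list \<Rightarrow> ('g, 'm) matA list" where
  "elem_args act m p (f # L) (g # gs) = Eel act m p g (f g) # elem_args act m (p + g) L gs"
| "elem_args act m p _ _ = []"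

lemma length_elem_args: "length gs = length L \<Longrightarrow> length (elem_args act m p L gs) = length L"
  by (induction L arbitrary: gs p) (auto simp: length_Suc_conv)

lemma elem_args_append: "length gs1 = length L1 \<Longrightarrow>
   elem_args act m p (L1 @ L2) (gs1 @ gs2)
     = elem_args act m p L1 gs1 @ elem_args act m (p + sum_list gs1) L2 gs2"
proof (induction L1 arbitrary: gs1 p)
  case (Cons f L)
  then obtain g gs where "gs1 = g # gs" "length gs = length L" by (auto simp: length_Suc_conv)
  then show ?case using Cons.IH[of gs "p + g"] by (simp add: add.assoc)
qed simp

lemma Eargs_elem_args: "length gs = length L \<Longrightarrow> Eargs act m L gs = elem_args act m 0 L gs"
proof -
  have "length gs = length L \<Longrightarrow>
    map (\<lambda>j. Eel act m (p + pp gs j) (gs ! j) ((L ! j) (gs ! j))) [0..<length gs]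
      = elem_args act m p L gs" for p
  proof (induction L arbitrary: gs p)
    case (Cons f L)
    then obtain g gs' where gs: "gs = g # gs'" "length gs' = length L" by (auto simp: length_Suc_conv)
    have "pp (g # gs') (Suc j) = g + pp gs' j" for j by (simp add: pp_def)
    then show ?case using Cons.IH[of gs' "p + g"] gs
      by (simp add: map_upt_Suc pp_def add.assoc del: upt_Suc)
  qed simp
  from this[of 0] show "length gs = length L \<Longrightarrow> ?thesis" by (simp add: Eargs_def)
qed

section \<open>Expansions\<close>

definition expand :: "('m \<Rightarrow> 'g::group_add \<Rightarrow> 'm) \<Rightarrow> ('g \<Rightarrow> 'g \<Rightarrow> 'm \<Rightarrow> complex)
     \<Rightarrow> (('g, 'm) matA list \<Rightarrow> complex) \<Rightarrow> ('g, 'm) elB list \<Rightarrow> complex" where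
  "expand act m F L =
     (\<Sum>gs\<in>labels L. if sum_list gs = 0 then F (elem_args act m 0 L gs) else 0)"

text \<open>The two functionals of argument lists through which a cochain c enters Psi_2:
  the a_0-slot and the unit slot.\<close>
definition at_args :: "('g, 'm) matA cochain \<Rightarrow> ('g, 'm) matA list \<Rightarrow> complex" where
  "at_args c E = c (0, hd E) (tl E)"

definition at_unit :: "('g, 'm) matA cochain \<Rightarrow> ('g, 'm) matA list \<Rightarrow> complex" where
  "at_unit c E = c (1, (\<lambda>g h x. 0)) E"

lemma expand_scale: "expand act m (\<lambda>E. s * F E) L = s * expand act m F L"
  by (simp add: expand_def sum_distrib_left if_distrib cong: if_cong)

lemma expand_zero: "expand act m (\<lambda>E. 0) L = 0"
  by (simp add: expand_def)

lemma expand_zero_entry: "expand act m F ((\<lambda>g x. 0) # L) = 0"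
  by (simp add: expand_def labels_Cons suppB_def)

locale gerbe =
  fixes act :: "'m \<Rightarrow> 'g::group_add \<Rightarrow> 'm"
    and m :: "'g \<Rightarrow> 'g \<Rightarrow> 'm \<Rightarrow> complex"
    and Sec :: "'g \<Rightarrow> ('m \<Rightarrow> complex) set"
    and HomSec :: "'g \<Rightarrow> 'g \<Rightarrow> ('m \<Rightarrow> complex) set"
  assumes gerbe_datum: "gerbe_datum act m Sec HomSec"
begin

lemma act_zero [simp]: "act x 0 = x"
  using gerbe_datum by (simp add: gerbe_datum_def)

lemma act_act [simp]: "act (act x g) h = act x (g + h)"
  using gerbe_datum by (simp add: gerbe_datum_def)

lemma m_nonzero [simp]: "m g h x \<noteq> 0"
  using gerbe_datum by (simp add: gerbe_datum_def)

lemma m_assoc: "m (g + h) k x * m g h x = m g (h + k) x * m h k (act x g)"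
  using gerbe_datum by (simp add: gerbe_datum_def)

lemma Sec_subspace: "subspace_C (Sec g)"
  using gerbe_datum by (simp add: gerbe_datum_def)

lemma HomSec_subspace: "subspace_C (HomSec g h)"
  using gerbe_datum by (simp add: gerbe_datum_def)

lemma Sec_zero [simp]: "(\<lambda>_. 0) \<in> Sec g"
  using Sec_subspace by (simp add: subspace_C_def)

lemma HomSec_zero [simp]: "(\<lambda>_. 0) \<in> HomSec g h"
  using HomSec_subspace by (simp add: subspace_C_def)

lemma Eel_HomSec: "a \<in> Sec h \<Longrightarrow> (\<lambda>x. m k h x * a (act x k)) \<in> HomSec k (k + h)"
  using gerbe_datum by (simp add: gerbe_datum_def)

lemma HomSec_comp: "\<phi> \<in> HomSec g h \<Longrightarrow> \<psi> \<in> HomSec h k \<Longrightarrow> (\<lambda>x. \<psi> x * \<phi> x) \<in> HomSec g k"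
  using gerbe_datum by (simp add: gerbe_datum_def)

lemma Sec_mult: "a \<in> Sec g \<Longrightarrow> a' \<in> Sec h \<Longrightarrow> (\<lambda>x. m g h x * a x * a' (act x g)) \<in> Sec (g + h)"
  using gerbe_datum by (simp add: gerbe_datum_def)

abbreviation "A \<equiv> algA HomSec"
abbreviation "B \<equiv> algB act m Sec"
abbreviation "CA \<equiv> acarr A"
abbreviation "CB \<equiv> acarr B"
abbreviation "zA \<equiv> (\<lambda>(g::'g) (h::'g) (x::'m). 0::complex)"

lemma acarrA: "CA = {f. finite (suppA f) \<and> (\<forall>g h. f g h \<in> HomSec g h)}"
  by (simp add: algA_def)
lemma amulA: "amul A f1 f2 = (\<lambda>h k x. \<Sum>g\<in>{g. f1 h g \<noteq> (\<lambda>_. 0)}. f2 g k x * f1 h g x)"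
  by (simp add: algA_def)
lemma aaddA: "aadd A f1 f2 = (\<lambda>g h x. f1 g h x + f2 g h x)"
  by (simp add: algA_def)
lemma ascA: "asc A \<alpha> f = (\<lambda>g h x. \<alpha> * f g h x)"
  by (simp add: algA_def)
lemma azeroA: "azero A = zA"
  by (simp add: algA_def)

lemma zA_carrier [simp]: "zA \<in> CA"
  by (simp add: algA_def suppA_def)

lemma aaddA_scaled_zero [simp]: "aadd A (asc A 0 y) x = x"
  by (simp add: aaddA ascA)

lemma aaddA_unit [simp]: "aadd A (asc A 1 y) zA = y"
  by (simp add: aaddA ascA)

lemma amulA_zero [simp]: "amul A zA f = zA" "amul A f zA = zA"
  by (simp_all add: amulA)

text \<open>The A-product of two elements of the carrier stays in the carrier; needed to apply
  invariance of a cochain to an argument which is itself a product.\<close>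
lemma amulA_carrier:
  assumes f1: "f1 \<in> CA" and f2: "f2 \<in> CA"
  shows "amul A f1 f2 \<in> CA"
proof -
  have fin1: "finite (suppA f1)" and fin2: "finite (suppA f2)"
    and h1: "\<And>g h. f1 g h \<in> HomSec g h" and h2: "\<And>g h. f2 g h \<in> HomSec g h"
    using f1 f2 by (auto simp: acarrA)
  have row_finite: "finite {g. f1 h g \<noteq> (\<lambda>_. 0)}" for h
    by (rule finite_subset[OF _ finite_imageI[OF fin1, of snd]]) (force simp: suppA_def)
  have "suppA (amul A f1 f2) \<subseteq> fst ` suppA f1 \<times> snd ` suppA f2"
  proof
    fix hk assume "hk \<in> suppA (amul A f1 f2)"
    then obtain h k where hk: "hk = (h, k)" and nz: "amul A f1 f2 h k \<noteq> (\<lambda>_. 0)"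
      by (auto simp: suppA_def)
    then obtain g where "f1 h g \<noteq> (\<lambda>_. 0)" "f2 g k \<noteq> (\<lambda>_. 0)"
      unfolding amulA by (fastforce simp: fun_eq_iff intro: sum.neutral)
    then have "(h, g) \<in> suppA f1" "(g, k) \<in> suppA f2" by (auto simp: suppA_def)
    then show "hk \<in> fst ` suppA f1 \<times> snd ` suppA f2" unfolding hk by force
  qed
  then have "finite (suppA (amul A f1 f2))"
    using fin1 fin2 finite_subset by blast
  moreover have "amul A f1 f2 h k \<in> HomSec h k" for h k
    unfolding amulA using row_finite[of h]
    by (auto intro!: subspace_C_sum[OF HomSec_subspace] HomSec_comp h1 h2)
  ultimately show ?thesis by (simp add: acarrA)
qed

lemma actA_nonzero_iff:
  "actA act m q f h j \<noteq> (\<lambda>_. 0) \<longleftrightarrow> f (- q + h) (- q + j) \<noteq> (\<lambda>_. 0)"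
proof
  assume "f (- q + h) (- q + j) \<noteq> (\<lambda>_. 0)"
  then obtain y where "f (- q + h) (- q + j) y \<noteq> 0" by auto
  then have "actA act m q f h j (act y (- q)) \<noteq> 0" by (simp add: actA_def)
  then show "actA act m q f h j \<noteq> (\<lambda>_. 0)" by auto
qed (auto simp: actA_def fun_eq_iff)

lemma actA_amul: "actA act m q (amul A f1 f2) = amul A (actA act m q f1) (actA act m q f2)"
proof (intro ext)
  fix h k x
  let ?S = "{j. f1 (- q + h) j \<noteq> (\<lambda>_. 0)}"
  have row: "{j. actA act m q f1 h j \<noteq> (\<lambda>_. 0)} = (\<lambda>j. q + j) ` ?S"
    by (force simp: actA_nonzero_iff image_iff)
  have inj: "inj_on (\<lambda>j. q + j) ?S" by (auto simp: inj_on_def)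
  have "amul A (actA act m q f1) (actA act m q f2) h k x
      = (\<Sum>j\<in>?S. m q (- q + k) x * (f2 j (- q + k) (act x q) * f1 (- q + h) j (act x q))
                 / m q (- q + h) x)"
    unfolding amulA row by (simp add: sum.reindex[OF inj] actA_def add.assoc[symmetric])
  also have "\<dots> = actA act m q (amul A f1 f2) h k x"
    by (simp add: actA_def amulA sum_distrib_left sum_divide_distrib)
  finally show "actA act m q (amul A f1 f2) h k x = amul A (actA act m q f1) (actA act m q f2) h k x"
    by simp
qed

lemma actA_zero [simp]: "actA act m q zA = zA"
  by (simp add: actA_def fun_eq_iff)

lemma Eel_apply:
  "Eel act m p h a g g' = (if g = p \<and> g' = p + h then (\<lambda>x. m p h x * a (act x p)) else (\<lambda>x. 0))"
  by (auto simp: Eel_def)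

lemma Eel_carrier: "a \<in> Sec h \<Longrightarrow> Eel act m p h a \<in> CA"
proof -
  assume a: "a \<in> Sec h"
  have "suppA (Eel act m p h a) \<subseteq> {(p, p + h)}"
    by (auto simp: suppA_def Eel_apply)
  then have "finite (suppA (Eel act m p h a))" using finite_subset by blast
  moreover have "Eel act m p h a g g' \<in> HomSec g g'" for g g'
    using Eel_HomSec[OF a] by (auto simp: Eel_apply)
  ultimately show ?thesis by (simp add: acarrA)
qed

lemma Eel_zero [simp]: "Eel act m p h (\<lambda>x. 0) = zA"
  by (auto simp: Eel_def fun_eq_iff)

lemma Eel_linear: "Eel act m p h (\<lambda>x. \<alpha> * a x + \<beta> * b x)
   = aadd A (asc A \<alpha> (Eel act m p h a)) (asc A \<beta> (Eel act m p h b))"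
  by (auto simp: Eel_def algA_def fun_eq_iff algebra_simps)

text \<open>The Gamma-action shifts the offset of an elementary matrix (associativity of mu).\<close>
lemma actA_Eel: "actA act m q (Eel act m p h a) = Eel act m (q + p) h a"
proof (intro ext)
  fix g g' x
  have "(- q + g = p \<and> - q + g' = p + h) \<longleftrightarrow> (g = q + p \<and> g' = q + p + h)"
    by (auto simp: add.assoc)
  moreover have "m q (p + h) x * (m p h (act x q) * y) / m q p x = m (q + p) h x * y" for y
    using m_assoc[of q p h x] by (simp add: field_simps)
  ultimately show "actA act m q (Eel act m p h a) g g' x = Eel act m (q + p) h a g g' x"
    unfolding actA_def Eel_def by (auto simp: add.assoc)
qed

text \<open>Composable elementary matrices multiply to the elementary matrix of the product in B
  (again associativity of mu).\<close>
lemma amul_Eel: "amul A (Eel act m p g a) (Eel act m (p + g) g' b)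
   = Eel act m p (g + g') (\<lambda>x. m g g' x * a x * b (act x g))"
proof (intro ext)
  fix h k x
  let ?S = "{j. Eel act m p g a h j \<noteq> (\<lambda>_. 0)}"
  show "amul A (Eel act m p g a) (Eel act m (p + g) g' b) h k x
      = Eel act m p (g + g') (\<lambda>x. m g g' x * a x * b (act x g)) h k x"
  proof (cases "h = p \<and> (\<lambda>x. m p g x * a (act x p)) \<noteq> (\<lambda>_. 0)")
    case True
    then have "?S = {p + g}" by (auto simp: Eel_apply)
    then show ?thesis
      unfolding amulA using True m_assoc[of p g g' x] by (auto simp: Eel_apply add.assoc)
  next
    case False
    then have "?S = {}" by (auto simp: Eel_apply)
    moreover have "h = p \<Longrightarrow> a (act y p) = 0" for y
      using False by (auto simp: fun_eq_iff)
    ultimately show ?thesis unfolding amulA by (auto simp: Eel_apply)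
  qed
qed

lemma elem_args_shift: "elem_args act m (q + p) L gs = map (actA act m q) (elem_args act m p L gs)"
proof (induction L arbitrary: gs p)
  case (Cons f L) then show ?case by (cases gs) (simp_all add: actA_Eel add.assoc)
qed simp

lemma acarrB: "CB = {f. finite (suppB f) \<and> (\<forall>g. f g \<in> Sec g)}"
  by (simp add: algB_def)
lemma amulB: "amul B u v = (\<lambda>h x. \<Sum>g\<in>suppB u. m g (- g + h) x * u g x * v (- g + h) (act x g))"
  by (simp add: algB_def)
lemma aaddB: "aadd B f1 f2 = (\<lambda>g x. f1 g x + f2 g x)"
  by (simp add: algB_def)
lemma ascB: "asc B \<alpha> f = (\<lambda>g x. \<alpha> * f g x)"
  by (simp add: algB_def)
lemma azeroB: "azero B = (\<lambda>g x. 0)"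
  by (simp add: algB_def)

lemma elem_args_carrier: "set L \<subseteq> CB \<Longrightarrow> set (elem_args act m p L gs) \<subseteq> CA"
proof (induction L arbitrary: gs p)
  case (Cons f L) then show ?case by (cases gs) (auto simp: acarrB intro!: Eel_carrier)
qed simp

lemma linear_combination_carrierB:
  assumes u: "u \<in> CB" and v: "v \<in> CB"
  shows "aadd B (asc B \<alpha> u) (asc B \<beta> v) \<in> CB"
proof -
  have "suppB (aadd B (asc B \<alpha> u) (asc B \<beta> v)) \<subseteq> suppB u \<union> suppB v"
    by (auto simp: suppB_def aaddB ascB)
  then show ?thesis using u v
    by (auto simp: acarrB aaddB ascB intro: finite_subset intro!: subspace_C_lin[OF Sec_subspace])
qed

lemma suppB_amulB: "suppB (amul B u v) \<subseteq> (\<lambda>(g, g'). g + g') ` (suppB u \<times> suppB v)"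
proof
  fix h assume h: "h \<in> suppB (amul B u v)"
  show "h \<in> (\<lambda>(g, g'). g + g') ` (suppB u \<times> suppB v)"
  proof (rule ccontr)
    assume "\<not> ?thesis"
    then have "- g + h \<notin> suppB v" if "g \<in> suppB u" for g
      using that by (force simp: add_minus_cancel)
    then have "amul B u v h = (\<lambda>_. 0)"
      by (auto simp: amulB suppB_def fun_eq_iff intro!: sum.neutral)
    then show False using h by (simp add: suppB_def)
  qed
qed

lemma amulB_carrier:
  assumes u: "u \<in> CB" and v: "v \<in> CB"
  shows "amul B u v \<in> CB"
proof -
  have "finite (suppB (amul B u v))"
    by (rule finite_subset[OF suppB_amulB]) (use u v in \<open>auto simp: acarrB\<close>)
  moreover have "amul B u v h \<in> Sec h" for h
    unfolding amulB using u v Sec_mult[of "u g" g "v (- g + h)" "- g + h" for g]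
    by (intro subspace_C_sum[OF Sec_subspace]) (auto simp: acarrB add_minus_cancel)
  ultimately show ?thesis by (simp add: acarrB)
qed

lemma sum_suppB_amulB:
  assumes u: "u \<in> CB" and v: "v \<in> CB"
    and K_sum: "\<And>h (S::'g set) \<phi>. finite S \<Longrightarrow> \<forall>g\<in>S. \<phi> g \<in> Sec h \<Longrightarrow>
                  K h (\<lambda>x. \<Sum>g\<in>S. \<phi> g x) = (\<Sum>g\<in>S. K h (\<phi> g))"
    and K_zero: "\<And>h. K h (\<lambda>_. 0) = 0"
  shows "(\<Sum>h\<in>suppB (amul B u v). K h (amul B u v h))
       = (\<Sum>g\<in>suppB u. \<Sum>g'\<in>suppB v. K (g + g') (\<lambda>x. m g g' x * u g x * v g' (act x g)))"
proof -
  let ?U = "suppB u" and ?V = "suppB v"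
  define H where "H = (\<lambda>(g, g'). g + g') ` (?U \<times> ?V)"
  define t where "t h g = (\<lambda>x. m g (- g + h) x * u g x * v (- g + h) (act x g))" for h g
  have fin: "finite ?U" "finite ?V" "finite H" using u v by (auto simp: acarrB H_def)
  have t_Sec: "t h g \<in> Sec h" for h g
    using Sec_mult[of "u g" g "v (- g + h)" "- g + h"] u v
    unfolding t_def by (auto simp: acarrB add_minus_cancel)
  have uv: "amul B u v h = (\<lambda>x. \<Sum>g\<in>?U. t h g x)" for h
    by (simp add: amulB t_def)
  have t_zero: "- g + h \<notin> ?V \<Longrightarrow> t h g = (\<lambda>_. 0)" for h g
    unfolding t_def by (simp add: suppB_def)
  have "(\<Sum>h\<in>suppB (amul B u v). K h (amul B u v h)) = (\<Sum>h\<in>H. K h (amul B u v h))"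
    using suppB_amulB fin by (intro sum.mono_neutral_left) (auto simp: H_def suppB_def K_zero)
  also have "\<dots> = (\<Sum>h\<in>H. \<Sum>g\<in>?U. K h (t h g))"
    unfolding uv using K_sum[OF fin(1)] t_Sec by (intro sum.cong refl) blast
  also have "\<dots> = (\<Sum>g\<in>?U. \<Sum>h\<in>H. K h (t h g))"
    by (rule sum.swap)
  also have "\<dots> = (\<Sum>g\<in>?U. \<Sum>g'\<in>?V. K (g + g') (t (g + g') g))"
  proof (rule sum.cong[OF refl])
    fix g assume "g \<in> ?U"
    then have sub: "(\<lambda>g'. g + g') ` ?V \<subseteq> H" by (auto simp: H_def)
    have "(\<Sum>h\<in>H. K h (t h g)) = (\<Sum>h\<in>(\<lambda>g'. g + g') ` ?V. K h (t h g))"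
    proof (intro sum.mono_neutral_right fin sub ballI)
      fix h assume "h \<in> H - (\<lambda>g'. g + g') ` ?V"
      then have "- g + h \<notin> ?V" by (metis DiffD2 add_minus_cancel image_eqI)
      then show "K h (t h g) = 0" using t_zero K_zero by simp
    qed
    then show "(\<Sum>h\<in>H. K h (t h g)) = (\<Sum>g'\<in>?V. K (g + g') (t (g + g') g))"
      by (simp add: sum.reindex inj_on_def)
  qed
  finally show ?thesis by (simp add: t_def minus_add_cancel)
qed

end

context gerbe
begin

lemma psi2_expand:
  assumes "f0 \<in> CB" "set fs \<subseteq> CB"
  shows "psi2 act m c (l, f0) fs = expand act m (at_args c) (f0 # fs) + l * expand act m (at_unit c) fs"
proof -
  have fin: "finite (labels (f0 # fs))" "finite (labels fs)"
    using assms by (auto intro!: finite_labels simp: acarrB)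
  have "(\<Sum>gs\<in>{gs \<in> labels L. sum_list gs = 0}. F (Eargs act m L gs)) = expand act m F L"
    if "finite (labels L)" for F L
    unfolding expand_def sum.inter_filter[OF that]
    by (intro sum.cong refl) (auto simp: length_labels Eargs_elem_args)
  from this[OF fin(1), of "at_args c"] this[OF fin(2), of "at_unit c"] show ?thesis
    by (simp add: psi2_def at_args_def at_unit_def)
qed

lemma expand_cong:
  assumes "\<And>E. length E = length L \<Longrightarrow> set E \<subseteq> CA \<Longrightarrow> F E = F' E" "set L \<subseteq> CB"
  shows "expand act m F L = expand act m F' L"
  unfolding expand_def using assms
  by (intro sum.cong refl) (auto simp: length_labels length_elem_args elem_args_carrier)

lemma expand_split:
  assumes "set pre \<subseteq> CB" "w \<in> CB" "set post \<subseteq> CB"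
  shows "expand act m F (pre @ w # post) =
    (\<Sum>a\<in>labels pre. \<Sum>h\<in>suppB w. \<Sum>b\<in>labels post.
       if sum_list a + (h + sum_list b) = 0
       then F (elem_args act m 0 pre a @ Eel act m (sum_list a) h (w h)
               # elem_args act m (sum_list a + h) post b)
       else 0)"
proof -
  have fin: "\<forall>f\<in>set pre. finite (suppB f)" "\<forall>f\<in>set (w # post). finite (suppB f)"
    using assms by (auto simp: acarrB)
  have "expand act m F (pre @ w # post) = (\<Sum>a\<in>labels pre. \<Sum>h\<in>suppB w. \<Sum>b\<in>labels post.
     if sum_list (a @ h # b) = 0 then F (elem_args act m 0 (pre @ w # post) (a @ h # b)) else 0)"
    unfolding expand_def sum_labels_append[OF fin] using fin
    by (intro sum.cong refl) (simp add: sum_labels_Cons)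
  also have "\<dots> = (\<Sum>a\<in>labels pre. \<Sum>h\<in>suppB w. \<Sum>b\<in>labels post.
       if sum_list a + (h + sum_list b) = 0
       then F (elem_args act m 0 pre a @ Eel act m (sum_list a) h (w h)
               # elem_args act m (sum_list a + h) post b)
       else 0)"
    by (intro sum.cong refl) (simp add: length_labels elem_args_append)
  finally show ?thesis .
qed

lemma expand_Cons:
  assumes "w \<in> CB" "set L \<subseteq> CB"
  shows "expand act m F (w # L) = (\<Sum>h\<in>suppB w. \<Sum>b\<in>labels L.
     if h + sum_list b = 0 then F (Eel act m 0 h (w h) # elem_args act m h L b) else 0)"
  using expand_split[of "[]" w L F] assms by (simp cong: if_cong)

lemma expand_split2:
  assumes "set pre \<subseteq> CB" "u \<in> CB" "v \<in> CB" "set post \<subseteq> CB"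
  shows "expand act m F (pre @ u # v # post) =
    (\<Sum>a\<in>labels pre. \<Sum>g\<in>suppB u. \<Sum>g'\<in>suppB v. \<Sum>b\<in>labels post.
       if sum_list a + (g + (g' + sum_list b)) = 0
       then F (elem_args act m 0 pre a @ Eel act m (sum_list a) g (u g)
               # Eel act m (sum_list a + g) g' (v g')
               # elem_args act m (sum_list a + g + g') post b)
       else 0)"
proof -
  have "finite (suppB v)" "\<forall>f\<in>set post. finite (suppB f)"
    using assms by (auto simp: acarrB)
  then show ?thesis
    using expand_split[of pre u "v # post" F] assms
    by (simp add: sum_labels_Cons add.assoc cong: if_cong)
qed

definition multilinear :: "nat \<Rightarrow> (('g, 'm) matA list \<Rightarrow> complex) \<Rightarrow> bool" where
  "multilinear N F \<longleftrightarrow> (\<forall>E j y z \<alpha> \<beta>. length E = N \<longrightarrow> set E \<subseteq> CA \<longrightarrow> j < N \<longrightarrow>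
      y \<in> CA \<longrightarrow> z \<in> CA \<longrightarrow>
      F (E[j := aadd A (asc A \<alpha> y) (asc A \<beta> z)]) = \<alpha> * F (E[j := y]) + \<beta> * F (E[j := z]))"

lemma multilinearD:
  "multilinear N F \<Longrightarrow> length E = N \<Longrightarrow> set E \<subseteq> CA \<Longrightarrow> j < N \<Longrightarrow> y \<in> CA \<Longrightarrow> z \<in> CA \<Longrightarrow>
   F (E[j := aadd A (asc A \<alpha> y) (asc A \<beta> z)]) = \<alpha> * F (E[j := y]) + \<beta> * F (E[j := z])"
  unfolding multilinear_def by blast

lemma multilinear_zero:
  assumes "multilinear N F" "length E = N" "set E \<subseteq> CA" "j < N"
  shows "F (E[j := zA]) = 0"
  using multilinearD[OF assms zA_carrier zA_carrier, of 0 0] by (simp add: aaddA ascA)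

lemma slot_zero:
  assumes "multilinear N F" "length (Ea @ x # Eb) = N" "set Ea \<subseteq> CA" "set Eb \<subseteq> CA"
  shows "F (Ea @ zA # Eb) = 0"
  using multilinear_zero[OF assms(1), of "Ea @ zA # Eb" "length Ea"] assms by auto

lemma slot_linear:
  assumes "multilinear N F" "length (Ea @ x # Eb) = N" "set Ea \<subseteq> CA" "set Eb \<subseteq> CA"
    and "a \<in> Sec h" "b \<in> Sec h"
  shows "F (Ea @ Eel act m p h (\<lambda>x. \<alpha> * a x + \<beta> * b x) # Eb)
     = \<alpha> * F (Ea @ Eel act m p h a # Eb) + \<beta> * F (Ea @ Eel act m p h b # Eb)"
  using multilinearD[OF assms(1), of "Ea @ zA # Eb" "length Ea" "Eel act m p h a" "Eel act m p h b"]
    assms by (simp add: Eel_carrier Eel_linear)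

lemma slot_sum:
  assumes F: "multilinear N F" "length (Ea @ x # Eb) = N" "set Ea \<subseteq> CA" "set Eb \<subseteq> CA"
    and "finite S" "\<forall>g\<in>S. \<phi> g \<in> Sec h"
  shows "F (Ea @ Eel act m p h (\<lambda>x. \<Sum>g\<in>S. \<phi> g x) # Eb) = (\<Sum>g\<in>S. F (Ea @ Eel act m p h (\<phi> g) # Eb))"
  using assms(5,6)
proof (induction S rule: finite_induct)
  case empty then show ?case using slot_zero[OF F] by simp
next
  case (insert g0 S)
  have "(\<lambda>x. \<Sum>g\<in>S. \<phi> g x) \<in> Sec h"
    using insert by (intro subspace_C_sum[OF Sec_subspace]) auto
  then have "F (Ea @ Eel act m p h (\<lambda>x. 1 * \<phi> g0 x + 1 * (\<Sum>g\<in>S. \<phi> g x)) # Eb)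
      = F (Ea @ Eel act m p h (\<phi> g0) # Eb) + F (Ea @ Eel act m p h (\<lambda>x. \<Sum>g\<in>S. \<phi> g x) # Eb)"
    using slot_linear[OF F, of "\<phi> g0" h "\<lambda>x. \<Sum>g\<in>S. \<phi> g x" p 1 1] insert by simp
  then show ?case using insert by simp
qed

lemma expand_linear_first:
  assumes F: "multilinear (Suc (length L)) F" and u: "u \<in> CB" and v: "v \<in> CB"
    and L: "set L \<subseteq> CB"
  shows "expand act m F (aadd B (asc B \<alpha> u) (asc B \<beta> v) # L)
       = \<alpha> * expand act m F (u # L) + \<beta> * expand act m F (v # L)"
proof -
  define w where "w = aadd B (asc B \<alpha> u) (asc B \<beta> v)"
  have wh: "w h = (\<lambda>x. \<alpha> * u h x + \<beta> * v h x)" for h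
    by (simp add: w_def aaddB ascB)
  have uS: "u h \<in> Sec h" and vS: "v h \<in> Sec h" for h using u v by (auto simp: acarrB)
  define R where "R h \<phi> = (\<Sum>b\<in>labels L.
     if h + sum_list b = 0 then F (Eel act m 0 h \<phi> # elem_args act m h L b) else 0)" for h \<phi>
  have len: "length ([] @ zA # elem_args act m h L b) = Suc (length L)" if "b \<in> labels L" for h b
    using that by (simp add: length_labels length_elem_args)
  have cs: "set ([]::('g,'m) matA list) \<subseteq> CA" "set (elem_args act m p L b) \<subseteq> CA" for p b
    using L by (auto intro!: elem_args_carrier)
  have R_zero: "R h (\<lambda>_. 0) = 0" for h
    unfolding R_def using slot_zero[OF F len cs] by (intro sum.neutral) simp
  have R_linear: "R h (w h) = \<alpha> * R h (u h) + \<beta> * R h (v h)" for h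
    unfolding R_def wh sum_distrib_left sum.distrib[symmetric]
    using slot_linear[OF F len cs uS vS] by (intro sum.cong refl) simp
  define W where "W = suppB u \<union> suppB v"
  have fW: "finite W" using u v by (auto simp: W_def acarrB)
  have on_W: "expand act m F (f # L) = (\<Sum>h\<in>W. R h (f h))" if "f \<in> CB" "suppB f \<subseteq> W" for f
    unfolding expand_Cons[OF that(1) L] R_def[symmetric] using that(2) fW
    by (intro sum.mono_neutral_left) (auto simp: suppB_def R_zero)
  have "w \<in> CB" "suppB w \<subseteq> W"
    using linear_combination_carrierB[OF u v] by (auto simp: w_def W_def suppB_def aaddB ascB)
  then have "expand act m F (w # L) = \<alpha> * (\<Sum>h\<in>W. R h (u h)) + \<beta> * (\<Sum>h\<in>W. R h (v h))"
    by (simp add: on_W R_linear sum.distrib sum_distrib_left)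
  also have "\<dots> = \<alpha> * expand act m F (u # L) + \<beta> * expand act m F (v # L)"
    using u v by (simp add: on_W W_def)
  finally show ?thesis unfolding w_def .
qed

end

text \<open>Multiplying the neighbouring entries j and j+1 of an argument list; this is what the
  inner faces d^(j+1) do.\<close>
definition merge_at :: "'a calg \<Rightarrow> nat \<Rightarrow> 'a list \<Rightarrow> 'a list" where
  "merge_at R j E = take j E @ amul R (E ! j) (E ! Suc j) # drop (Suc (Suc j)) E"

lemma merge_at_append [simp]:
  "length Ea = j \<Longrightarrow> merge_at R j (Ea @ x # y # Eb) = Ea @ amul R x y # Eb"
  by (simp add: merge_at_def nth_append)

lemma merge_at_Cons [simp]: "merge_at R (Suc j) (e # E) = e # merge_at R j E"
  by (simp add: merge_at_def)

context gerbe
begin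

lemma expand_merge:
  assumes F: "multilinear (Suc (length pre + length post)) F"
    and L: "set pre \<subseteq> CB" "set post \<subseteq> CB" and u: "u \<in> CB" and v: "v \<in> CB"
  shows "expand act m F (pre @ amul B u v # post)
       = expand act m (\<lambda>E. F (merge_at A (length pre) E)) (pre @ u # v # post)"
proof -
  define K where "K a b h \<phi> = (if sum_list a + (h + sum_list b) = 0
     then F (elem_args act m 0 pre a @ Eel act m (sum_list a) h \<phi>
             # elem_args act m (sum_list a + h) post b) else 0)" for a b h \<phi>
  define prod where "prod g g' = (\<lambda>x. m g g' x * u g x * v g' (act x g))" for g g'
  have LHS: "expand act m F (pre @ amul B u v # post) = (\<Sum>a\<in>labels pre.
      \<Sum>h\<in>suppB (amul B u v). \<Sum>b\<in>labels post. K a b h (amul B u v h))"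
    unfolding K_def by (rule expand_split[OF L(1) amulB_carrier[OF u v] L(2)])
  have RHS: "expand act m (\<lambda>E. F (merge_at A (length pre) E)) (pre @ u # v # post)
     = (\<Sum>a\<in>labels pre. \<Sum>g\<in>suppB u. \<Sum>g'\<in>suppB v. \<Sum>b\<in>labels post. K a b (g + g') (prod g g'))"
    unfolding expand_split2[OF L(1) u v L(2)] K_def prod_def
    by (intro sum.cong refl)
      (simp add: length_labels length_elem_args amul_Eel add.assoc cong: if_cong)
  have len: "length (elem_args act m 0 pre a @ zA # elem_args act m (sum_list a + h) post b)
      = Suc (length pre + length post)" if "a \<in> labels pre" "b \<in> labels post" for a b h
    using that by (simp add: length_labels length_elem_args)
  have cs: "set (elem_args act m 0 pre a) \<subseteq> CA" "set (elem_args act m p post b) \<subseteq> CA" for a b p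
    using L by (auto intro!: elem_args_carrier)
  have K_sum: "K a b h (\<lambda>x. \<Sum>g\<in>S. \<phi> g x) = (\<Sum>g\<in>S. K a b h (\<phi> g))"
    if "a \<in> labels pre" "b \<in> labels post" "finite S" "\<forall>g\<in>S. \<phi> g \<in> Sec h"
    for a b h and S :: "'g set" and \<phi>
    unfolding K_def using slot_sum[OF F len[OF that(1,2)] cs that(3,4)] by simp
  have K_zero: "K a b h (\<lambda>_. 0) = 0" if "a \<in> labels pre" "b \<in> labels post" for a b h
    unfolding K_def using slot_zero[OF F len[OF that] cs] by simp
  have "(\<Sum>h\<in>suppB (amul B u v). \<Sum>b\<in>labels post. K a b h (amul B u v h))
      = (\<Sum>g\<in>suppB u. \<Sum>g'\<in>suppB v. \<Sum>b\<in>labels post. K a b (g + g') (prod g g'))"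
    if a: "a \<in> labels pre" for a
  proof -
    have "(\<Sum>h\<in>suppB (amul B u v). \<Sum>b\<in>labels post. K a b h (amul B u v h))
        = (\<Sum>b\<in>labels post. \<Sum>h\<in>suppB (amul B u v). K a b h (amul B u v h))"
      by (rule sum.swap)
    also have "\<dots> = (\<Sum>b\<in>labels post. \<Sum>g\<in>suppB u. \<Sum>g'\<in>suppB v. K a b (g + g') (prod g g'))"
      unfolding prod_def
      using K_sum K_zero a by (intro sum.cong refl sum_suppB_amulB u v) simp_all
    also have "\<dots> = (\<Sum>g\<in>suppB u. \<Sum>g'\<in>suppB v. \<Sum>b\<in>labels post. K a b (g + g') (prod g g'))"
      by (simp add: sum.swap[of _ "labels post"])
    finally show ?thesis .
  qed
  then show ?thesis unfolding LHS RHS by (rule sum.cong[OF refl])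
qed

definition invariant :: "nat \<Rightarrow> (('g, 'm) matA list \<Rightarrow> complex) \<Rightarrow> bool" where
  "invariant N G \<longleftrightarrow> (\<forall>q E. length E = N \<longrightarrow> set E \<subseteq> CA \<longrightarrow> G (map (actA act m q) E) = G E)"

lemma invariant_rotate1: "invariant N G \<Longrightarrow> invariant N (\<lambda>E. G (rotate1 E))"
  by (simp add: invariant_def rotate1_map)

lemma add_eq_0_commute: "(a::'g) + b = 0 \<longleftrightarrow> b + a = 0"
  by (metis eq_neg_iff_add_eq_0 neg_eq_iff_add_eq_0)

text \<open>Moving the first entry, labelled h, to the end shifts all other
  offsets by -h, which the invariance of G absorbs.\<close>
lemma expand_rotate1:
  assumes G: "invariant (length L) G" and L: "set L \<subseteq> CB"
  shows "expand act m G (rotate1 L) = expand act m (\<lambda>E. G (rotate1 E)) L"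
proof (cases L)
  case (Cons x L0)
  have x: "x \<in> CB" and L0: "set L0 \<subseteq> CB" using L Cons by auto
  have shift: "G (elem_args act m 0 L0 a @ [Eel act m (sum_list a) h (x h)])
      = G (rotate1 (Eel act m 0 h (x h) # elem_args act m h L0 a))"
    if "a \<in> labels L0" "sum_list a + h = 0" for a h
  proof -
    have sa: "sum_list a = - h" using that(2) by (simp add: eq_neg_iff_add_eq_0)
    define E where "E = elem_args act m 0 L0 a @ [Eel act m (- h) h (x h)]"
    have "length E = length L" "set E \<subseteq> CA"
      using L0 x that(1) unfolding E_def Cons
      by (auto simp: length_labels length_elem_args acarrB
               intro!: elem_args_carrier[THEN subsetD] Eel_carrier)
    then have "G (map (actA act m h) E) = G E"
      using G unfolding invariant_def by blast
    then show ?thesis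
      using elem_args_shift[of h 0 L0 a] by (simp add: E_def sa actA_Eel)
  qed
  have "expand act m G (rotate1 L) = (\<Sum>a\<in>labels L0. \<Sum>h\<in>suppB x.
      if sum_list a + h = 0 then G (elem_args act m 0 L0 a @ [Eel act m (sum_list a) h (x h)]) else 0)"
    using expand_split[of L0 x "[]" G] Cons x L0 by (simp cong: if_cong)
  also have "\<dots> = (\<Sum>h\<in>suppB x. \<Sum>a\<in>labels L0.
      if h + sum_list a = 0 then G (rotate1 (Eel act m 0 h (x h) # elem_args act m h L0 a)) else 0)"
    unfolding sum.swap[of _ "labels L0"]
  proof (intro sum.cong refl)
    fix h a assume "a \<in> labels L0"
    then show "(if sum_list a + h = 0
                then G (elem_args act m 0 L0 a @ [Eel act m (sum_list a) h (x h)]) else 0)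
        = (if h + sum_list a = 0 then G (rotate1 (Eel act m 0 h (x h) # elem_args act m h L0 a))
           else 0)"
      using shift[of a h] add_eq_0_commute[of "sum_list a" h] by simp
  qed
  also have "\<dots> = expand act m (\<lambda>E. G (rotate1 E)) L"
    unfolding Cons using expand_Cons[OF x L0, of "\<lambda>E. G (rotate1 E)"] by simp
  finally show ?thesis .
qed (simp add: expand_def)

lemma expand_rotate:
  assumes "invariant (length L) G" "set L \<subseteq> CB"
  shows "expand act m G (rotate k L) = expand act m (\<lambda>E. G (rotate k E)) L"
  using assms(1)
proof (induction k arbitrary: G)
  case (Suc k)
  have "expand act m G (rotate (Suc k) L) = expand act m (\<lambda>E. G (rotate1 E)) (rotate k L)"
    using expand_rotate1[of "rotate k L" G] Suc.prems assms(2) by simp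
  also have "\<dots> = expand act m (\<lambda>E. G (rotate (Suc k) E)) L"
    using Suc.IH[OF invariant_rotate1[OF Suc.prems]] by simp
  finally show ?case .
qed simp

end

lemma dface_first: "dface R n 0 f (l, a0) (a1 # as) = f (0, aadd R (asc R l a1) (amul R a0 a1)) as"
  by (simp add: dface_def)

lemma dface_inner: "Suc j \<le> n \<Longrightarrow> dface R n (Suc j) f (l, a0) as = f (l, a0) (merge_at R j as)"
  by (simp add: dface_def merge_at_def)

lemma dface_last: "length as = n \<Longrightarrow>
   dface R n (Suc n) f (l, a0) (as @ [a]) = f (0, aadd R (asc R l a) (amul R a a0)) as"
  by (simp add: dface_def nth_append)

lemma sbar_rotate:
  assumes "i \<le> n" "length as = n"
  shows "sbar R n i f (l, a0) as = (-1) ^ (n * i) * f (1, azero R) (rotate i (a0 # as))"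
proof (cases i)
  case (Suc j)
  then have "rotate i (a0 # as) = drop (Suc j) (a0 # as) @ take (Suc j) (a0 # as)"
    using assms by (simp add: rotate_drop_take)
  then show ?thesis using Suc by (simp add: sbar_def)
qed (simp add: sbar_def)

lemma rotate_snoc: "length as = k \<Longrightarrow> rotate k (as @ [a]) = a # as"
  using rotate_append[of as "[a]"] by simp

context gerbe
begin

lemma multilinear_at_args:
  assumes c: "cochain_on A n c"
  shows "multilinear (Suc n) (at_args c)"
  unfolding multilinear_def
proof (intro allI impI)
  fix E :: "('g,'m) matA list" and j y z \<alpha> \<beta>
  assume E: "length E = Suc n" "set E \<subseteq> CA" and j: "j < Suc n" and y: "y \<in> CA" and z: "z \<in> CA"
  then obtain e0 es where E_eq: "E = e0 # es" "length es = n" "set es \<subseteq> CA" "e0 \<in> CA"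
    by (cases E) auto
  show "at_args c (E[j := aadd A (asc A \<alpha> y) (asc A \<beta> z)])
      = \<alpha> * at_args c (E[j := y]) + \<beta> * at_args c (E[j := z])"
  proof (cases j)
    case 0
    have "c (\<alpha> * 0 + \<beta> * 0, aadd A (asc A \<alpha> y) (asc A \<beta> z)) es
        = \<alpha> * c (0, y) es + \<beta> * c (0, z) es"
      using c y z E_eq unfolding cochain_on_def by blast
    then show ?thesis using 0 E_eq by (simp add: at_args_def)
  next
    case (Suc j')
    have "cochain_args A n (0, e0) es" using E_eq by (simp add: cochain_args_def)
    then show ?thesis
      using c y z j Suc E_eq unfolding cochain_on_def by (simp add: at_args_def)
  qed
qed

lemma multilinear_at_unit:
  assumes c: "cochain_on A n c"
  shows "multilinear n (at_unit c)"
  using c unfolding multilinear_def cochain_on_def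
  by (simp add: at_unit_def cochain_args_def)

lemma invariant_cochainD:
  "invariant_cochain act m HomSec n c \<Longrightarrow> a0 \<in> CA \<Longrightarrow> length as = n \<Longrightarrow> set as \<subseteq> CA \<Longrightarrow>
   c (l, actA act m q a0) (map (actA act m q) as) = c (l, a0) as"
  unfolding invariant_cochain_def cochain_args_def by auto

lemma invariant_at_args:
  assumes "invariant_cochain act m HomSec n c"
  shows "invariant (Suc n) (at_args c)"
  unfolding invariant_def
proof (intro allI impI)
  fix q and E :: "('g,'m) matA list"
  assume "length E = Suc n" "set E \<subseteq> CA"
  then show "at_args c (map (actA act m q) E) = at_args c E"
    using invariant_cochainD[OF assms] by (cases E) (auto simp: at_args_def)
qed

lemma invariant_at_unit:
  assumes "invariant_cochain act m HomSec n c"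
  shows "invariant n (at_unit c)"
  unfolding invariant_def at_unit_def using invariant_cochainD[OF assms, of zA] by simp

text \<open>Merging neighbouring slots preserves invariance, because Gamma acts on A by
  automorphisms.\<close>
lemma invariant_merge_at:
  assumes "Suc j \<le> N" "invariant N G"
  shows "invariant (Suc N) (\<lambda>E. G (merge_at A j E))"
  unfolding invariant_def
proof (intro allI impI)
  fix q and E :: "('g,'m) matA list"
  assume E: "length E = Suc N" "set E \<subseteq> CA"
  have "map (actA act m q) (merge_at A j E) = merge_at A j (map (actA act m q) E)"
    using assms(1) E(1) by (simp add: merge_at_def take_map drop_map actA_amul)
  moreover have "length (merge_at A j E) = N" "set (merge_at A j E) \<subseteq> CA"
    using assms(1) E by (auto simp: merge_at_def intro!: amulA_carrier dest: in_set_takeD in_set_dropD)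
  ultimately show "G (merge_at A j (map (actA act m q) E)) = G (merge_at A j E)"
    using assms(2) unfolding invariant_def by metis
qed

lemma at_args_dface_last:
  assumes "length E = Suc (Suc n)"
  shows "at_args (dface A n (Suc n) c) E = at_args c (merge_at A 0 (rotate (Suc n) E))"
proof -
  obtain e0 E' where "E = e0 # E'" "length E' = Suc n"
    using assms by (auto simp: length_Suc_conv)
  moreover obtain es x where "E' = es @ [x]"
    using \<open>length E' = Suc n\<close> by (cases E' rule: rev_cases) auto
  ultimately show ?thesis
    using rotate_snoc[of "e0 # es" "Suc n" x] by (simp add: at_args_def dface_last merge_at_def)
qed

lemma at_unit_dface_last:
  assumes "length E = Suc n"
  shows "at_unit (dface A n (Suc n) c) E = at_args c (rotate n E)"
proof -
  obtain es x where "E = es @ [x]" "length es = n"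
    using assms by (cases E rule: rev_cases) auto
  then show ?thesis by (simp add: at_unit_def at_args_def dface_last rotate_snoc)
qed

text \<open>On argument lists of A, sbar^i in the a_0-slot is a signed rotation into the unit
  slot, while in the unit slot it vanishes, because it puts the zero element 1 - 1 of A
  into an argument slot.\<close>
lemma at_args_sbar:
  "i \<le> n \<Longrightarrow> length E = Suc n \<Longrightarrow>
   at_args (sbar A n i c) E = (-1) ^ (n * i) * at_unit c (rotate i E)"
  by (cases E) (auto simp: at_args_def at_unit_def sbar_rotate azeroA)

lemma at_unit_sbar:
  assumes c: "cochain_on A (Suc n) c" and i: "i \<le> n" and E: "length E = n" "set E \<subseteq> CA"
  shows "at_unit (sbar A n i c) E = 0"
proof -
  have zero_slot: "at_unit c (Ea @ zA # Eb) = 0"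
    if "length Ea + length Eb = n" "set Ea \<subseteq> CA" "set Eb \<subseteq> CA" for Ea Eb
    using slot_zero[OF multilinear_at_unit[OF c], of Ea zA Eb] that by simp
  show ?thesis
  proof (cases i)
    case 0
    then show ?thesis using zero_slot[of "[]" E] E by (simp add: at_unit_def sbar_def azeroA)
  next
    case (Suc j)
    then show ?thesis using zero_slot[of "drop j E" "take j E"] E i
      by (auto simp: at_unit_def sbar_def azeroA dest: in_set_dropD in_set_takeD)
  qed
qed

text \<open>Psi_2 is linear in the cochain, so the statements for b and B follow from those
  for the individual d^i and sbar^i.\<close>
lemma psi2_sum: "psi2 act m (\<lambda>x0 as. \<Sum>i\<in>I. C i x0 as) x0 fs = (\<Sum>i\<in>I. psi2 act m (C i) x0 fs)"
  by (cases x0) (simp add: psi2_def sum.distrib sum_distrib_left sum.swap[of _ I])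

lemma psi2_outer_face:
  assumes c: "cochain_on A n c" and x: "x \<in> CB" and y: "y \<in> CB" and z: "z \<in> CB"
    and L: "set L \<subseteq> CB" "length L = n"
  shows "psi2 act m c (0, aadd B (asc B l x) (amul B y z)) L
       = l * expand act m (at_args c) (x # L) + expand act m (at_args c) (amul B y z # L)"
proof -
  have yz: "amul B y z \<in> CB" using amulB_carrier[OF y z] .
  have "aadd B (asc B l x) (amul B y z) = aadd B (asc B l x) (asc B 1 (amul B y z))"
    by (simp add: ascB)
  moreover have "psi2 act m c (0, aadd B (asc B l x) (asc B 1 (amul B y z))) L
      = expand act m (at_args c) (aadd B (asc B l x) (asc B 1 (amul B y z)) # L)"
    using psi2_expand[OF linear_combination_carrierB[OF x yz] L(1)] by simp
  ultimately show ?thesis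
    using expand_linear_first[of L "at_args c" x "amul B y z" l 1] multilinear_at_args[OF c] x yz L
    by simp
qed

section \<open>Psi_2 commutes with the faces\<close>

text \<open>d^0 multiplies the first two entries: fact (1) splits off the unit part, fact (2)
  identifies the product part.\<close>
lemma psi2_dface_first:
  assumes c: "cochain_on A n c" and f0: "f0 \<in> CB" and f1: "f1 \<in> CB"
    and fs: "set fs \<subseteq> CB" "length fs = n"
  shows "psi2 act m (dface A n 0 c) (l, f0) (f1 # fs) = dface B n 0 (psi2 act m c) (l, f0) (f1 # fs)"
proof -
  have args: "expand act m (at_args (dface A n 0 c)) (f0 # f1 # fs)
      = expand act m (\<lambda>E. at_args c (merge_at A 0 E)) (f0 # f1 # fs)"
    by (rule expand_cong)
      (use f0 f1 fs in \<open>auto simp: length_Suc_conv at_args_def dface_first merge_at_def\<close>)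
  have unit: "expand act m (at_unit (dface A n 0 c)) (f1 # fs) = expand act m (at_args c) (f1 # fs)"
    by (rule expand_cong)
      (use f1 fs in \<open>auto simp: length_Suc_conv at_args_def at_unit_def dface_first\<close>)
  have merge: "expand act m (at_args c) (amul B f0 f1 # fs)
      = expand act m (\<lambda>E. at_args c (merge_at A 0 E)) (f0 # f1 # fs)"
    using expand_merge[of "[]" fs "at_args c" f0 f1] multilinear_at_args[OF c] f0 f1 fs by simp
  show ?thesis
    using psi2_outer_face[OF c f1 f0 f1 fs, of l] psi2_expand[OF f0, of "f1 # fs" "dface A n 0 c" l]
      f1 fs args unit merge
    by (simp add: dface_first)
qed

text \<open>An inner face d^i multiplies the entries i-1 and i in both the a_0-slot and the unit
  slot; both are instances of fact (2).\<close>
lemma psi2_dface_inner: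
  assumes c: "cochain_on A n c" and f0: "f0 \<in> CB"
    and L: "set pre \<subseteq> CB" "u \<in> CB" "v \<in> CB" "set post \<subseteq> CB"
    and len: "length (pre @ u # v # post) = Suc n"
  shows "psi2 act m (dface A n (Suc (length pre)) c) (l, f0) (pre @ u # v # post)
       = dface B n (Suc (length pre)) (psi2 act m c) (l, f0) (pre @ u # v # post)"
proof -
  let ?i = "Suc (length pre)" and ?fs = "pre @ u # v # post"
  have le: "Suc (length pre) \<le> n" using len by simp
  have args: "expand act m (at_args (dface A n ?i c)) (f0 # ?fs)
      = expand act m (\<lambda>E. at_args c (merge_at A ?i E)) (f0 # ?fs)"
    by (rule expand_cong)
      (use f0 L le in \<open>auto simp: length_Suc_conv at_args_def dface_inner\<close>)
  have unit: "at_unit (dface A n ?i c) = (\<lambda>E. at_unit c (merge_at A (length pre) E))"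
    using le by (simp add: at_unit_def dface_inner fun_eq_iff)
  have uv: "amul B u v \<in> CB" using amulB_carrier L by blast
  have "dface B n ?i (psi2 act m c) (l, f0) ?fs = psi2 act m c (l, f0) (pre @ amul B u v # post)"
    using le by (simp add: dface_inner)
  also have "\<dots> = expand act m (at_args c) ((f0 # pre) @ amul B u v # post)
                  + l * expand act m (at_unit c) (pre @ amul B u v # post)"
    using psi2_expand[OF f0] L uv by simp
  also have "\<dots> = psi2 act m (dface A n ?i c) (l, f0) ?fs"
    using expand_merge[of "f0 # pre" post "at_args c" u v] expand_merge[of pre post "at_unit c" u v]
      multilinear_at_args[OF c] multilinear_at_unit[OF c] psi2_expand[OF f0] f0 L len args unit
    by simp
  finally show ?thesis by simp
qed

text \<open>The last face moves the last entry around to the front before multiplying; fact (3)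
  converts this rotation of the list in B into a rotation of the argument list in A.\<close>
lemma psi2_dface_last:
  assumes c: "cochain_on A n c" and inv: "invariant_cochain act m HomSec n c"
    and f0: "f0 \<in> CB" and fs: "set fs \<subseteq> CB" "length fs = n" and fn: "fn \<in> CB"
  shows "psi2 act m (dface A n (Suc n) c) (l, f0) (fs @ [fn])
       = dface B n (Suc n) (psi2 act m c) (l, f0) (fs @ [fn])"
proof -
  have rot_unit: "expand act m (at_args c) (fn # fs)
      = expand act m (\<lambda>E. at_args c (rotate n E)) (fs @ [fn])"
    using expand_rotate[of "fs @ [fn]" "at_args c" n] invariant_at_args[OF inv] fs fn
    by (simp add: rotate_snoc)
  have rot_args: "expand act m (at_args c) (amul B fn f0 # fs)
      = expand act m (\<lambda>E. at_args c (merge_at A 0 (rotate (Suc n) E))) (f0 # fs @ [fn])"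
  proof -
    have rot: "rotate (Suc n) (f0 # fs @ [fn]) = fn # f0 # fs"
      using rotate_snoc[of "f0 # fs" "Suc n" fn] fs by simp
    have "expand act m (at_args c) (amul B fn f0 # fs)
        = expand act m (\<lambda>E. at_args c (merge_at A 0 E)) (fn # f0 # fs)"
      using expand_merge[of "[]" fs "at_args c" fn f0] multilinear_at_args[OF c] f0 fs fn
      by simp
    also have "\<dots> = expand act m (\<lambda>E. at_args c (merge_at A 0 E)) (rotate (Suc n) (f0 # fs @ [fn]))"
      by (simp only: rot)
    also have "\<dots> = expand act m (\<lambda>E. at_args c (merge_at A 0 (rotate (Suc n) E))) (f0 # fs @ [fn])"
      by (rule expand_rotate)
        (use invariant_merge_at[of 0 "Suc n", OF _ invariant_at_args[OF inv]] f0 fs fn in auto)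
    finally show ?thesis .
  qed
  have args: "expand act m (at_args (dface A n (Suc n) c)) (f0 # fs @ [fn])
      = expand act m (\<lambda>E. at_args c (merge_at A 0 (rotate (Suc n) E))) (f0 # fs @ [fn])"
    by (rule expand_cong) (use at_args_dface_last f0 fs fn in auto)
  have unit: "expand act m (at_unit (dface A n (Suc n) c)) (fs @ [fn])
      = expand act m (\<lambda>E. at_args c (rotate n E)) (fs @ [fn])"
    by (rule expand_cong) (use at_unit_dface_last fs fn in auto)
  have "psi2 act m (dface A n (Suc n) c) (l, f0) (fs @ [fn])
      = expand act m (at_args c) (amul B fn f0 # fs) + l * expand act m (at_args c) (fn # fs)"
    using psi2_expand[OF f0, of "fs @ [fn]" "dface A n (Suc n) c" l] fs fn
    unfolding args unit rot_args rot_unit by simp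
  also have "\<dots> = dface B n (Suc n) (psi2 act m c) (l, f0) (fs @ [fn])"
    using psi2_outer_face[OF c fn fn f0 fs, of l] fs(2) by (simp add: dface_last)
  finally show ?thesis .
qed

lemma psi2_dface:
  assumes c: "cochain_on A n c" "invariant_cochain act m HomSec n c"
    and i: "i \<le> Suc n" and args: "cochain_args B (Suc n) x0 fs"
  shows "psi2 act m (dface A n i c) x0 fs = dface B n i (psi2 act m c) x0 fs"
proof -
  obtain l f0 where x0: "x0 = (l, f0)" by (cases x0)
  have f0: "f0 \<in> CB" and fs: "set fs \<subseteq> CB" "length fs = Suc n"
    using args by (auto simp: cochain_args_def x0)
  consider "i = 0" | j where "i = Suc j" "Suc j \<le> n" | "i = Suc n"
    using i by (cases i) (auto simp: le_Suc_eq)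
  then show ?thesis
  proof cases
    case 1
    then show ?thesis
      using psi2_dface_first[OF c(1) f0, of "hd fs" "tl fs" l] fs x0 by (cases fs) auto
  next
    case (2 j)
    obtain pre u v post where "fs = pre @ u # v # post" "length pre = j"
    proof
      show "fs = take j fs @ fs ! j # fs ! Suc j # drop (Suc (Suc j)) fs"
        using fs(2) 2 by (simp add: Cons_nth_drop_Suc)
      show "length (take j fs) = j" using fs(2) 2 by simp
    qed
    then show ?thesis
      using psi2_dface_inner[OF c(1) f0, of pre u v post l] fs x0 2 by simp
  next
    case 3
    obtain fs' fn where "fs = fs' @ [fn]"
      using fs(2) by (cases fs rule: rev_cases) auto
    then show ?thesis
      using psi2_dface_last[OF c f0, of fs' fn l] fs x0 3 by simp
  qed
qed

section \<open>Psi_2 commutes with the cyclic operators\<close>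

text \<open>sbar^i of Psi_2(c) is a signed expansion of c along a rotated list; fact (3) moves the
  rotation to the argument lists in A.\<close>
lemma psi2_sbar:
  assumes c: "cochain_on A (Suc n) c" and inv: "invariant_cochain act m HomSec (Suc n) c"
    and i: "i \<le> n" and args: "cochain_args B n x0 fs"
  shows "psi2 act m (sbar A n i c) x0 fs = sbar B n i (psi2 act m c) x0 fs"
proof -
  obtain l f0 where x0: "x0 = (l, f0)" by (cases x0)
  have f0: "f0 \<in> CB" and fs: "set fs \<subseteq> CB" "length fs = n"
    using args by (auto simp: cochain_args_def x0)
  define s where "s = ((-1) ^ (n * i) :: complex)"
  have "sbar B n i (psi2 act m c) (l, f0) fs = s * psi2 act m c (1, (\<lambda>g x. 0)) (rotate i (f0 # fs))"
    using sbar_rotate[OF i fs(2)] by (simp add: s_def azeroB)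
  also have "\<dots> = s * expand act m (at_unit c) (rotate i (f0 # fs))"
    using psi2_expand[of "\<lambda>g x. 0" "rotate i (f0 # fs)" c 1] f0 fs
    by (simp add: expand_zero_entry acarrB suppB_def)
  also have "\<dots> = expand act m (\<lambda>E. s * at_unit c (rotate i E)) (f0 # fs)"
    using expand_rotate[of "f0 # fs" "at_unit c" i] invariant_at_unit[OF inv] f0 fs
    by (simp add: expand_scale)
  also have "\<dots> = expand act m (at_args (sbar A n i c)) (f0 # fs)"
    by (rule expand_cong) (use f0 fs i at_args_sbar in \<open>auto simp: s_def\<close>)
  also have "\<dots> = psi2 act m (sbar A n i c) (l, f0) fs"
  proof -
    have "expand act m (at_unit (sbar A n i c)) fs = expand act m (\<lambda>E. 0) fs"
      by (rule expand_cong) (use fs at_unit_sbar[OF c i] in auto)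
    then show ?thesis
      using psi2_expand[OF f0 fs(1), of "sbar A n i c" l] by (simp add: expand_zero)
  qed
  finally show ?thesis by (simp add: x0)
qed

lemma psi2_bop:
  assumes "cochain_on A n c" "invariant_cochain act m HomSec n c" "cochain_args B (Suc n) x0 fs"
  shows "psi2 act m (bop A n c) x0 fs = bop B n (psi2 act m c) x0 fs"
  unfolding bop_def psi2_sum using psi2_dface[OF assms(1,2) _ assms(3)] by simp

lemma psi2_Bop:
  assumes "cochain_on A (Suc n) c" "invariant_cochain act m HomSec (Suc n) c"
    "cochain_args B n x0 fs"
  shows "psi2 act m (Bop A n c) x0 fs = Bop B n (psi2 act m c) x0 fs"
  unfolding Bop_def psi2_sum using psi2_sbar[OF assms(1,2) _ assms(3)] by simp

end

theorem theorem5: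
  fixes act :: "'m \<Rightarrow> 'g::group_add \<Rightarrow> 'm"
    and m :: "'g \<Rightarrow> 'g \<Rightarrow> 'm \<Rightarrow> complex"
    and Sec :: "'g \<Rightarrow> ('m \<Rightarrow> complex) set"
    and HomSec :: "'g \<Rightarrow> 'g \<Rightarrow> ('m \<Rightarrow> complex) set"
    and n :: nat
  assumes "gerbe_datum act m Sec HomSec"
  shows
    \<comment> \<open>Psi_2 d^i = d^i Psi_2 on CC^n(A)^Gamma, 0 \<le> i \<le> n+1\<close>
    "(\<forall>c. cochain_on (algA HomSec) n c \<and> invariant_cochain act m HomSec n c \<longrightarrow>
        (\<forall>i\<le>Suc n. \<forall>x0 fs. cochain_args (algB act m Sec) (Suc n) x0 fs \<longrightarrow>
           psi2 act m (dface (algA HomSec) n i c) x0 fs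
             = dface (algB act m Sec) n i (psi2 act m c) x0 fs))
   \<and> \<comment> \<open>Psi_2 sbar^i = sbar^i Psi_2 on CC^(n+1)(A)^Gamma, 0 \<le> i \<le> n\<close>
     (\<forall>c. cochain_on (algA HomSec) (Suc n) c \<and> invariant_cochain act m HomSec (Suc n) c \<longrightarrow>
        (\<forall>i\<le>n. \<forall>x0 fs. cochain_args (algB act m Sec) n x0 fs \<longrightarrow>
           psi2 act m (sbar (algA HomSec) n i c) x0 fs
             = sbar (algB act m Sec) n i (psi2 act m c) x0 fs))
   \<and> \<comment> \<open>Psi_2 b = b Psi_2\<close>
     (\<forall>c. cochain_on (algA HomSec) n c \<and> invariant_cochain act m HomSec n c \<longrightarrow>
        (\<forall>x0 fs. cochain_args (algB act m Sec) (Suc n) x0 fs \<longrightarrow>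
           psi2 act m (bop (algA HomSec) n c) x0 fs = bop (algB act m Sec) n (psi2 act m c) x0 fs))
   \<and> \<comment> \<open>Psi_2 B = B Psi_2\<close>
     (\<forall>c. cochain_on (algA HomSec) (Suc n) c \<and> invariant_cochain act m HomSec (Suc n) c \<longrightarrow>
        (\<forall>x0 fs. cochain_args (algB act m Sec) n x0 fs \<longrightarrow>
           psi2 act m (Bop (algA HomSec) n c) x0 fs = Bop (algB act m Sec) n (psi2 act m c) x0 fs))"
proof -
  interpret gerbe act m Sec HomSec by (rule gerbe.intro) (rule assms)
  show ?thesis
    using psi2_dface psi2_sbar psi2_bop psi2_Bop by blast
qed

end
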